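(* Consider the following algorithm for $1\,||\,\sum w_jU_j$: let $d^{(1)}<\cdots<d^{(d_{\#})}$ be the distinct due dates and $J_i=\{j : d_j=d^{(i)}\}$; compute the solution vector $A_i$ of each $J_i$ (viewed as an instance on its own); set $A=A_1$; for $i=2,\ldots,d_{\#}$ set $A=A\oplus A_i$; return $\sum_j w_j - A[d_{\max}]$. This algorithm correctly returns the minimum total weight of tardy jobs.
   Context: In $1\,||\,\sum w_jU_j$ we are given $n$ jobs, job $j$ with processing time $p_j\in\mathbb{N}$, weight $w_j\in\mathbb{N}$, due date $d_j\in\mathbb{N}$; jobs are scheduled non-preemptively on one machine in some order, job $j$ is early if its completion time (sum of processing times of jobs up to and including $j$) is at most $d_j$ and tardy otherwise; the goal is the minimum total weight of tardy jobs. $d_{\max}=\max_j d_j$, $d_{\#}$ is the number of distinct due dates. A subset $S$ of jobs is called a set of early jobs if there is a schedule in which all jobs of $S$ are early. The solution vector of an instance $J$ (with maximum due date $D$) is the integer vector $(A[k])_{k=0}^{D}$ where $A[k]$ is the maximum total weight of a set of early jobs of $J$ with total processing time at most $k$. For integer vectors $A=(A[k])_{k=0}^m$, $B=(B[\ell])_{\ell=0}^{n'}$ with $m\le n'$, the $(\max,+)$-convolution $A\oplus B$ is the vector $(C[\ell])_{\ell=0}^{n'}$ with $C[\ell]=\max_{0\le k\le \ell}(A[k]+B[\ell-k])$ (terms with $k>m$ omitted). *)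

theory Defs
  imports Main
begin

definition completion :: "(nat \<Rightarrow> nat) \<Rightarrow> nat list \<Rightarrow> nat \<Rightarrow> nat" where
  "completion p \<sigma> i = sum_list (map p (take (Suc i) \<sigma>))"

definition is_schedule :: "nat set \<Rightarrow> nat list \<Rightarrow> bool" where
  "is_schedule J \<sigma> \<longleftrightarrow> distinct \<sigma> \<and> set \<sigma> = J"

definition tardy_weight :: "(nat \<Rightarrow> nat) \<Rightarrow> (nat \<Rightarrow> nat) \<Rightarrow> (nat \<Rightarrow> nat) \<Rightarrow> nat list \<Rightarrow> nat" where
  "tardy_weight p w d \<sigma> =
     (\<Sum>i<length \<sigma>. if completion p \<sigma> i > d (\<sigma> ! i) then w (\<sigma> ! i) else 0)"

definition opt_tardy :: "nat \<Rightarrow> (nat \<Rightarrow> nat) \<Rightarrow> (nat \<Rightarrow> nat) \<Rightarrow> (nat \<Rightarrow> nat) \<Rightarrow> nat" where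
  "opt_tardy n p w d = Min {tardy_weight p w d \<sigma> | \<sigma>. is_schedule {..<n} \<sigma>}"

definition early_set :: "(nat \<Rightarrow> nat) \<Rightarrow> (nat \<Rightarrow> nat) \<Rightarrow> nat set \<Rightarrow> nat set \<Rightarrow> bool" where
  "early_set p d J S \<longleftrightarrow> S \<subseteq> J \<and>
     (\<exists>\<sigma>. is_schedule J \<sigma> \<and> (\<forall>i<length \<sigma>. \<sigma> ! i \<in> S \<longrightarrow> completion p \<sigma> i \<le> d (\<sigma> ! i)))"

definition sol_vec :: "(nat \<Rightarrow> nat) \<Rightarrow> (nat \<Rightarrow> nat) \<Rightarrow> (nat \<Rightarrow> nat) \<Rightarrow> nat set \<Rightarrow> int list" where
  "sol_vec p w d J =
     map (\<lambda>k. Max {int (sum w S) | S. early_set p d J S \<and> sum p S \<le> k}) [0..<Suc (Max (d ` J))]"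

(* (max,+)-convolution of A = (A[k])_{k=0..m} and B = (B[l])_{l=0..n'}, m <= n';
   result has length n'+1, terms with k > m omitted *)
definition maxplus_conv :: "int list \<Rightarrow> int list \<Rightarrow> int list" where
  "maxplus_conv A B =
     map (\<lambda>l. Max {A ! k + B ! (l - k) | k. k \<le> l \<and> k < length A}) [0..<length B]"

definition distinct_due_dates :: "nat \<Rightarrow> (nat \<Rightarrow> nat) \<Rightarrow> nat list" where
  "distinct_due_dates n d = sorted_list_of_set (d ` {..<n})"

definition due_class :: "nat \<Rightarrow> (nat \<Rightarrow> nat) \<Rightarrow> nat \<Rightarrow> nat set" where
  "due_class n d dd = {j. j < n \<and> d j = dd}"

definition algorithm :: "nat \<Rightarrow> (nat \<Rightarrow> nat) \<Rightarrow> (nat \<Rightarrow> nat) \<Rightarrow> (nat \<Rightarrow> nat) \<Rightarrow> int" where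
  "algorithm n p w d =
     (let vecs = map (\<lambda>dd. sol_vec p w d (due_class n d dd)) (distinct_due_dates n d);
          A = foldl maxplus_conv (hd vecs) (tl vecs);
          dmax = Max (d ` {..<n})
      in int (\<Sum>j<n. w j) - A ! dmax)"

end

theory Submission
  imports Defs
begin

(* By Jackson's rule, a job set S can be scheduled with all its jobs early iff for every t
   the jobs of S due by t have total processing time at most t; the earliest-due-date order
   then does it.  This condition no longer refers to the ambient instance.  So if all jobs
   of U are due before c and all jobs of C are due at c, an early set of U \<union> C of
   processing time at most l \<le> c splits into early sets of U and of C of processing
   times k \<le> l and at most l - k, and conversely such a pair remains early jointly.
   Hence each convolution step of the algorithm yields the solution vector of the jobs
   due by the next due date, and its entry at d_max is the maximum weight of an early
   set, i.e. the total weight minus the optimum. *)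

definition edd_feasible :: "(nat \<Rightarrow> nat) \<Rightarrow> (nat \<Rightarrow> nat) \<Rightarrow> nat set \<Rightarrow> bool" where
  "edd_feasible p d S \<longleftrightarrow> (\<forall>t. sum p {x\<in>S. d x \<le> t} \<le> t)"

lemma edd_feasible_empty: "edd_feasible p d {}"
  by (simp add: edd_feasible_def)

lemma edd_feasible_subset:
  assumes "edd_feasible p d S" "T \<subseteq> S" "finite S"
  shows "edd_feasible p d T"
  unfolding edd_feasible_def
proof
  fix t
  have "sum p {x\<in>T. d x \<le> t} \<le> sum p {x\<in>S. d x \<le> t}"
    using assms(2,3) by (intro sum_mono2) auto
  also have "\<dots> \<le> t"
    using assms(1) by (simp add: edd_feasible_def)
  finally show "sum p {x\<in>T. d x \<le> t} \<le> t" .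
qed

lemma edd_feasible_sum_le:
  assumes "edd_feasible p d S" "\<forall>x\<in>S. d x \<le> t"
  shows "sum p S \<le> t"
proof -
  have "{x\<in>S. d x \<le> t} = S"
    using assms(2) by auto
  then show ?thesis
    using assms(1) unfolding edd_feasible_def by metis
qed

lemma edd_feasible_Un:
  assumes "edd_feasible p d S" "\<forall>x\<in>T. c \<le> d x" "finite (S \<union> T)" "sum p (S \<union> T) \<le> c"
  shows "edd_feasible p d (S \<union> T)"
  unfolding edd_feasible_def
proof
  fix t
  show "sum p {x \<in> S \<union> T. d x \<le> t} \<le> t"
  proof (cases "c \<le> t")
    case True
    have "sum p {x \<in> S \<union> T. d x \<le> t} \<le> sum p (S \<union> T)"
      using assms(3) by (intro sum_mono2) auto
    then show ?thesis
      using True assms(4) by linarith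
  next
    case False
    then have "{x \<in> S \<union> T. d x \<le> t} = {x \<in> S. d x \<le> t}"
      using assms(2) by force
    then show ?thesis
      using assms(1) unfolding edd_feasible_def by simp
  qed
qed

lemma completion_eq_sum_set_take:
  "distinct \<sigma> \<Longrightarrow> completion p \<sigma> i = sum p (set (take (Suc i) \<sigma>))"
  unfolding completion_def by (simp add: sum_list_distinct_conv_sum_set)

lemma set_take_Suc_sorted_map_le:
  assumes "sorted (map f xs)" "i < length xs"
  shows "set (take (Suc i) xs) \<subseteq> {x \<in> set xs. f x \<le> f (xs ! i)}"
proof
  fix x
  assume "x \<in> set (take (Suc i) xs)"
  then obtain j where "j \<le> i" "x = xs ! j"
    using assms(2) by (auto simp: in_set_conv_nth less_Suc_eq_le)
  then show "x \<in> {x \<in> set xs. f x \<le> f (xs ! i)}"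
    using sorted_nth_mono[OF assms(1), of j i] assms(2) by auto
qed

lemma early_set_imp_edd_feasible:
  assumes "early_set p d J S"
  shows "edd_feasible p d S"
  unfolding edd_feasible_def
proof
  fix t
  obtain \<sigma> where sched: "distinct \<sigma>" "set \<sigma> = J" "S \<subseteq> J"
    and early: "\<forall>i<length \<sigma>. \<sigma> ! i \<in> S \<longrightarrow> completion p \<sigma> i \<le> d (\<sigma> ! i)"
    using assms unfolding early_set_def is_schedule_def by blast
  let ?X = "{x\<in>S. d x \<le> t}"
  let ?I = "{i. i < length \<sigma> \<and> \<sigma> ! i \<in> ?X}"
  have pos: "\<exists>i. i < length \<sigma> \<and> \<sigma> ! i = x" if "x \<in> ?X" for x
    using that sched by (auto simp: in_set_conv_nth)
  show "sum p ?X \<le> t"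
  proof (cases "?I = {}")
    case True
    then have "?X = {}"
      using pos by blast
    then show ?thesis
      by (simp only: sum.empty le0)
  next
    case False
    define m where "m = Max ?I"
    have m: "m < length \<sigma>" "\<sigma> ! m \<in> ?X"
      using Max_in[of ?I] False unfolding m_def by auto
    have "?X \<subseteq> set (take (Suc m) \<sigma>)"
    proof
      fix x
      assume "x \<in> ?X"
      then obtain i where i: "i < length \<sigma>" "\<sigma> ! i = x"
        using pos by blast
      then have "i \<le> m"
        using \<open>x \<in> ?X\<close> unfolding m_def by (intro Max_ge) auto
      then show "x \<in> set (take (Suc m) \<sigma>)"
        using i by (auto simp: in_set_conv_nth intro!: exI[of _ i])
    qed
    then have "sum p ?X \<le> completion p \<sigma> m"
      unfolding completion_eq_sum_set_take[OF sched(1)] by (intro sum_mono2) auto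
    also have "\<dots> \<le> d (\<sigma> ! m)"
      using early m by auto
    also have "\<dots> \<le> t"
      using m by simp
    finally show ?thesis .
  qed
qed

lemma edd_feasible_imp_early_set:
  assumes "finite J" "S \<subseteq> J" "edd_feasible p d S"
  shows "early_set p d J S"
proof -
  define \<tau> where "\<tau> = sort_key d (sorted_list_of_set S)"
  define \<sigma> where "\<sigma> = \<tau> @ sorted_list_of_set (J - S)"
  have fin: "finite S"
    using assms(1,2) finite_subset by blast
  have \<tau>: "set \<tau> = S" "distinct \<tau>" "sorted (map d \<tau>)"
    unfolding \<tau>_def using fin by auto
  have "is_schedule J \<sigma>"
    unfolding is_schedule_def \<sigma>_def using \<tau> assms(1,2) by auto
  moreover have "completion p \<sigma> i \<le> d (\<sigma> ! i)" if i: "i < length \<sigma>" "\<sigma> ! i \<in> S" for i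
  proof -
    have "i < length \<tau>"
    proof (rule ccontr)
      assume "\<not> i < length \<tau>"
      then have "\<sigma> ! i \<in> set (sorted_list_of_set (J - S))"
        using i(1) unfolding \<sigma>_def by (simp add: nth_append)
      then show False
        using i(2) assms(1) by simp
    qed
    then have "completion p \<sigma> i = sum p (set (take (Suc i) \<tau>))"
      using \<tau>(2) by (simp add: \<sigma>_def completion_def sum_list_distinct_conv_sum_set)
    also have "\<dots> \<le> sum p {x\<in>S. d x \<le> d (\<tau> ! i)}"
      using set_take_Suc_sorted_map_le[OF \<tau>(3) \<open>i < length \<tau>\<close>] \<tau>(1) fin
      by (intro sum_mono2) auto
    also have "\<dots> \<le> d (\<tau> ! i)"
      using assms(3) unfolding edd_feasible_def by blast
    finally show ?thesis
      using \<open>i < length \<tau>\<close> by (simp add: \<sigma>_def nth_append)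
  qed
  ultimately show ?thesis
    unfolding early_set_def using assms(2) by blast
qed

lemma early_set_iff_edd_feasible:
  "finite J \<Longrightarrow> early_set p d J S \<longleftrightarrow> S \<subseteq> J \<and> edd_feasible p d S"
  by (meson early_set_def early_set_imp_edd_feasible edd_feasible_imp_early_set)

definition max_early_weight ::
    "(nat \<Rightarrow> nat) \<Rightarrow> (nat \<Rightarrow> nat) \<Rightarrow> (nat \<Rightarrow> nat) \<Rightarrow> nat set \<Rightarrow> nat \<Rightarrow> int" where
  "max_early_weight p w d J k =
     Max {int (sum w S) | S. S \<subseteq> J \<and> edd_feasible p d S \<and> sum p S \<le> k}"

lemma finite_weights_of_subsets:
  "finite J \<Longrightarrow> finite {int (sum w S) | S. S \<subseteq> J \<and> P S}"
  by (rule finite_subset[of _ "(\<lambda>S. int (sum w S)) ` Pow J"]) auto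

lemma max_early_weight_ge:
  assumes "finite J" "S \<subseteq> J" "edd_feasible p d S" "sum p S \<le> k"
  shows "int (sum w S) \<le> max_early_weight p w d J k"
  unfolding max_early_weight_def
  using assms by (intro Max_ge[OF finite_weights_of_subsets]) auto

lemma obtain_max_early_weight_set:
  assumes "finite J"
  obtains S where "S \<subseteq> J" "edd_feasible p d S" "sum p S \<le> k"
    "max_early_weight p w d J k = int (sum w S)"
proof -
  have "max_early_weight p w d J k
      \<in> {int (sum w S) | S. S \<subseteq> J \<and> edd_feasible p d S \<and> sum p S \<le> k}"
    unfolding max_early_weight_def
    using assms edd_feasible_empty by (intro Max_in finite_weights_of_subsets) fastforce+
  then show ?thesis
    using that by blast
qed

lemma sol_vec_eq_max_early_weight:
  "finite J \<Longrightarrow> sol_vec p w d J = map (max_early_weight p w d J) [0..<Suc (Max (d ` J))]"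
  unfolding sol_vec_def max_early_weight_def by (simp add: early_set_iff_edd_feasible)

lemma max_early_weight_eq_Max_early_set:
  assumes "finite J" "\<forall>j\<in>J. d j \<le> k"
  shows "max_early_weight p w d J k = Max {int (sum w S) | S. early_set p d J S}"
proof -
  have "S \<subseteq> J \<and> edd_feasible p d S \<and> sum p S \<le> k \<longleftrightarrow> early_set p d J S" for S
    using early_set_iff_edd_feasible[OF assms(1), of p d S] edd_feasible_sum_le[of p d S k] assms(2)
    by auto
  then show ?thesis
    unfolding max_early_weight_def by (simp only:)
qed

lemma max_early_weight_Un_ge:
  assumes "finite U" "finite C" "\<forall>x\<in>U. d x < c" "\<forall>x\<in>C. d x = c" "k \<le> l" "l \<le> c"
  shows "max_early_weight p w d U k + max_early_weight p w d C (l - k)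
           \<le> max_early_weight p w d (U \<union> C) l"
proof -
  obtain S where S: "S \<subseteq> U" "edd_feasible p d S" "sum p S \<le> k"
    "max_early_weight p w d U k = int (sum w S)"
    using obtain_max_early_weight_set[OF assms(1)] by metis
  obtain T where T: "T \<subseteq> C" "sum p T \<le> l - k"
    "max_early_weight p w d C (l - k) = int (sum w T)"
    using obtain_max_early_weight_set[OF assms(2)] by metis
  have fin: "finite S" "finite T"
    using S(1) T(1) assms(1,2) finite_subset by auto
  have "S \<inter> T = {}"
    using S(1) T(1) assms(3,4) by fastforce
  then have sum_Un: "sum f (S \<union> T) = sum f S + sum f T" for f :: "nat \<Rightarrow> nat"
    using sum.union_disjoint[OF fin] by simp
  have "sum p (S \<union> T) \<le> l"
    using sum_Un S(3) T(2) assms(5) by simp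
  moreover have "edd_feasible p d (S \<union> T)"
    using S(2) T(1) assms(4,6) fin \<open>sum p (S \<union> T) \<le> l\<close>
    by (intro edd_feasible_Un[where c = c]) auto
  ultimately have "int (sum w (S \<union> T)) \<le> max_early_weight p w d (U \<union> C) l"
    using S(1) T(1) assms(1,2) by (intro max_early_weight_ge) auto
  then show ?thesis
    using S(4) T(3) sum_Un[of w] by simp
qed

lemma max_early_weight_Un_le:
  assumes "finite U" "finite C" "\<forall>x\<in>U. d x \<le> a" "\<forall>x\<in>C. a < d x"
  obtains k where "k \<le> l" "k \<le> a"
    "max_early_weight p w d (U \<union> C) l
       \<le> max_early_weight p w d U k + max_early_weight p w d C (l - k)"
proof -
  obtain S where S: "S \<subseteq> U \<union> C" "edd_feasible p d S" "sum p S \<le> l"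
    "max_early_weight p w d (U \<union> C) l = int (sum w S)"
    using obtain_max_early_weight_set[of "U \<union> C"] assms(1,2) by (metis finite_UnI)
  have fin: "finite S"
    using S(1) assms(1,2) finite_subset by blast
  have split: "S = (S \<inter> U) \<union> (S \<inter> C)" "(S \<inter> U) \<inter> (S \<inter> C) = {}"
    using S(1) assms(3,4) by fastforce+
  then have sum_split: "sum f S = sum f (S \<inter> U) + sum f (S \<inter> C)" for f :: "nat \<Rightarrow> nat"
    using fin by (metis finite_Int sum.union_disjoint)
  have feasible: "edd_feasible p d (S \<inter> U)" "edd_feasible p d (S \<inter> C)"
    using edd_feasible_subset[OF S(2) _ fin] by auto
  define k where "k = sum p (S \<inter> U)"
  have "k \<le> a"
    unfolding k_def using edd_feasible_sum_le[OF feasible(1)] assms(3) by blast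
  moreover have "k \<le> l"
    using sum_split[of p] S(3) unfolding k_def by linarith
  moreover have "int (sum w (S \<inter> U)) \<le> max_early_weight p w d U k"
    using assms(1) feasible(1) unfolding k_def by (intro max_early_weight_ge) auto
  moreover have "int (sum w (S \<inter> C)) \<le> max_early_weight p w d C (l - k)"
    using assms(2) feasible(2) sum_split[of p] S(3) unfolding k_def
    by (intro max_early_weight_ge) auto
  ultimately show ?thesis
    using that S(4) sum_split[of w] by simp
qed

lemma maxplus_conv_map_upt:
  "maxplus_conv (map f [0..<Suc a]) (map g [0..<Suc c])
     = map (\<lambda>l. Max {f k + g (l - k) | k. k \<le> l \<and> k \<le> a}) [0..<Suc c]"
proof -
  have "{map f [0..<Suc a] ! k + map g [0..<Suc c] ! (l - k) | k.
           k \<le> l \<and> k < length (map f [0..<Suc a])}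
      = {f k + g (l - k) | k. k \<le> l \<and> k \<le> a}" if "l \<le> c" for l
    using that by (intro Collect_cong ex_cong1) (auto simp del: upt_Suc simp add: nth_map_upt)
  then show ?thesis
    unfolding maxplus_conv_def by (intro map_cong) (simp_all del: upt_Suc)
qed

lemma maxplus_conv_max_early_weight:
  assumes "finite U" "finite C" "\<forall>x\<in>U. d x \<le> a" "a < c" "\<forall>x\<in>C. d x = c"
  shows "maxplus_conv (map (max_early_weight p w d U) [0..<Suc a])
                      (map (max_early_weight p w d C) [0..<Suc c])
       = map (max_early_weight p w d (U \<union> C)) [0..<Suc c]"
  unfolding maxplus_conv_map_upt
proof (intro map_cong refl antisym)
  fix l
  assume "l \<in> set [0..<Suc c]"
  then have "l \<le> c"
    by (simp del: upt_Suc)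
  let ?L = "{max_early_weight p w d U k + max_early_weight p w d C (l - k) | k. k \<le> l \<and> k \<le> a}"
  have "finite ?L"
    by simp
  show "Max ?L \<le> max_early_weight p w d (U \<union> C) l"
    using max_early_weight_Un_ge[OF assms(1,2) _ assms(5) _ \<open>l \<le> c\<close>] assms(3,4)
    by (intro Max.boundedI \<open>finite ?L\<close>) force+
  have "\<forall>x\<in>C. a < d x"
    using assms(4,5) by simp
  then obtain k where k: "k \<le> l" "k \<le> a"
    "max_early_weight p w d (U \<union> C) l
       \<le> max_early_weight p w d U k + max_early_weight p w d C (l - k)"
    by (rule max_early_weight_Un_le[OF assms(1,2,3)])
  then have "max_early_weight p w d U k + max_early_weight p w d C (l - k) \<in> ?L"
    by blast
  then have "max_early_weight p w d U k + max_early_weight p w d C (l - k) \<le> Max ?L"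
    using \<open>finite ?L\<close> by (rule Max_ge[rotated])
  then show "max_early_weight p w d (U \<union> C) l \<le> Max ?L"
    by (rule order_trans[OF k(3)])
qed

lemma sol_vec_due_class:
  assumes "dd \<in> d ` {..<n}"
  shows "sol_vec p w d (due_class n d dd)
           = map (max_early_weight p w d (due_class n d dd)) [0..<Suc dd]"
proof -
  have "d ` due_class n d dd = {dd}"
    using assms unfolding due_class_def by auto
  then show ?thesis
    using sol_vec_eq_max_early_weight[of "due_class n d dd"] by (simp add: due_class_def)
qed

lemma foldl_maxplus_conv_sol_vec:
  assumes "sorted_wrt (<) (dd0 # ds)" "set (dd0 # ds) \<subseteq> d ` {..<n}"
  shows "foldl maxplus_conv (sol_vec p w d (due_class n d dd0))
           (map (\<lambda>dd. sol_vec p w d (due_class n d dd)) ds)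
       = map (max_early_weight p w d {j. j < n \<and> d j \<in> set (dd0 # ds)})
           [0..<Suc (Max (set (dd0 # ds)))]"
  using assms
proof (induction ds rule: rev_induct)
  case Nil
  then show ?case
    using sol_vec_due_class[of dd0 d n p w] by (simp add: due_class_def)
next
  case (snoc c ds)
  let ?D = "set (dd0 # ds)"
  let ?U = "{j. j < n \<and> d j \<in> ?D}"
  have sorted: "sorted_wrt (<) (dd0 # ds)" and less: "\<forall>x\<in>?D. x < c"
    using snoc.prems(1) sorted_wrt_append[of _ "dd0 # ds" "[c]"] by auto
  have c: "c \<in> d ` {..<n}"
    using snoc.prems(2) by simp
  have "Max ?D < c"
    using less by simp
  have Max_snoc: "Max (set (dd0 # ds @ [c])) = c"
    using less by (intro Max_eqI) auto
  have jobs_snoc: "{j. j < n \<and> d j \<in> set (dd0 # ds @ [c])} = ?U \<union> due_class n d c"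
    by (auto simp: due_class_def)
  have "foldl maxplus_conv (sol_vec p w d (due_class n d dd0))
          (map (\<lambda>dd. sol_vec p w d (due_class n d dd)) (ds @ [c]))
      = maxplus_conv (map (max_early_weight p w d ?U) [0..<Suc (Max ?D)])
          (map (max_early_weight p w d (due_class n d c)) [0..<Suc c])"
    using snoc.IH[OF sorted] snoc.prems(2) sol_vec_due_class[OF c] by simp
  also have "\<dots> = map (max_early_weight p w d (?U \<union> due_class n d c)) [0..<Suc c]"
    using \<open>Max ?D < c\<close> by (intro maxplus_conv_max_early_weight) (auto simp: due_class_def)
  finally show ?case
    unfolding Max_snoc jobs_snoc .
qed

definition on_time_jobs :: "(nat \<Rightarrow> nat) \<Rightarrow> (nat \<Rightarrow> nat) \<Rightarrow> nat list \<Rightarrow> nat set" where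
  "on_time_jobs p d \<sigma> = nth \<sigma> ` {i. i < length \<sigma> \<and> completion p \<sigma> i \<le> d (\<sigma> ! i)}"

lemma tardy_weight_add_on_time_jobs:
  assumes "is_schedule J \<sigma>"
  shows "tardy_weight p w d \<sigma> + sum w (on_time_jobs p d \<sigma>) = sum w J"
proof -
  let ?on_time = "\<lambda>i. completion p \<sigma> i \<le> d (\<sigma> ! i)"
  have dist: "distinct \<sigma>" and "nth \<sigma> ` {..<length \<sigma>} = J"
    using assms unfolding is_schedule_def by (auto simp: in_set_conv_nth)
  then have "sum w J = (\<Sum>i<length \<sigma>. w (\<sigma> ! i))"
    using sum.reindex[OF inj_on_nth[OF dist, of "{..<length \<sigma>}"], of w] by simp
  also have "\<dots> = tardy_weight p w d \<sigma> + (\<Sum>i<length \<sigma>. if ?on_time i then w (\<sigma> ! i) else 0)"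
    unfolding tardy_weight_def sum.distrib[symmetric] by (intro sum.cong) auto
  also have "(\<Sum>i<length \<sigma>. if ?on_time i then w (\<sigma> ! i) else 0)
      = (\<Sum>i\<in>{i. i < length \<sigma> \<and> ?on_time i}. w (\<sigma> ! i))"
    by (simp add: sum.inter_filter[symmetric] lessThan_def)
  also have "\<dots> = sum w (on_time_jobs p d \<sigma>)"
    unfolding on_time_jobs_def by (subst sum.reindex) (auto intro: inj_on_nth[OF dist])
  finally show ?thesis
    by simp
qed

lemma early_set_on_time_jobs:
  assumes "is_schedule J \<sigma>"
  shows "early_set p d J (on_time_jobs p d \<sigma>)"
proof -
  have "on_time_jobs p d \<sigma> \<subseteq> J"
    using assms unfolding on_time_jobs_def is_schedule_def by auto
  moreover have "completion p \<sigma> i \<le> d (\<sigma> ! i)"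
    if "i < length \<sigma>" "\<sigma> ! i \<in> on_time_jobs p d \<sigma>" for i
    using that assms unfolding on_time_jobs_def is_schedule_def by (auto simp: nth_eq_iff_index_eq)
  ultimately show ?thesis
    unfolding early_set_def using assms by blast
qed

lemma early_set_subset_on_time_jobs:
  assumes "early_set p d J S"
  obtains \<sigma> where "is_schedule J \<sigma>" "S \<subseteq> on_time_jobs p d \<sigma>"
proof -
  obtain \<sigma> where \<sigma>: "is_schedule J \<sigma>" "S \<subseteq> J"
    "\<forall>i<length \<sigma>. \<sigma> ! i \<in> S \<longrightarrow> completion p \<sigma> i \<le> d (\<sigma> ! i)"
    using assms unfolding early_set_def by blast
  have "S \<subseteq> on_time_jobs p d \<sigma>"
  proof
    fix x
    assume "x \<in> S"
    then obtain i where "i < length \<sigma>" "x = \<sigma> ! i"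
      using \<sigma>(1,2) unfolding is_schedule_def by (force simp: in_set_conv_nth)
    then show "x \<in> on_time_jobs p d \<sigma>"
      using \<sigma>(3) \<open>x \<in> S\<close> unfolding on_time_jobs_def by blast
  qed
  then show ?thesis
    using that \<sigma>(1) by blast
qed

lemma Max_early_weight_eq_opt_tardy:
  "Max {int (sum w S) | S. early_set p d {..<n} S} = int (sum w {..<n}) - int (opt_tardy n p w d)"
proof -
  let ?TW = "{tardy_weight p w d \<sigma> | \<sigma>. is_schedule {..<n} \<sigma>}"
  have "tardy_weight p w d \<sigma> \<le> sum w {..<n}" if "is_schedule {..<n} \<sigma>" for \<sigma>
    using tardy_weight_add_on_time_jobs[OF that, of p w d] by linarith
  then have "?TW \<subseteq> {..sum w {..<n}}"
    by force
  then have "finite ?TW"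
    using finite_subset by blast
  moreover have "is_schedule {..<n} [0..<n]"
    unfolding is_schedule_def by auto
  ultimately have "opt_tardy n p w d \<in> ?TW"
    unfolding opt_tardy_def by (intro Min_in) blast+
  then obtain \<sigma>\<^sub>0 where \<sigma>\<^sub>0: "is_schedule {..<n} \<sigma>\<^sub>0" "opt_tardy n p w d = tardy_weight p w d \<sigma>\<^sub>0"
    by blast
  show ?thesis
  proof (rule Max_eqI)
    show "finite {int (sum w S) | S. early_set p d {..<n} S}"
      using finite_weights_of_subsets[of "{..<n}" w "early_set p d {..<n}"]
      unfolding early_set_def by simp
  next
    fix y
    assume "y \<in> {int (sum w S) | S. early_set p d {..<n} S}"
    then obtain S \<sigma> where S: "y = int (sum w S)" "is_schedule {..<n} \<sigma>" "S \<subseteq> on_time_jobs p d \<sigma>"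
      using early_set_subset_on_time_jobs by blast
    have "sum w S \<le> sum w (on_time_jobs p d \<sigma>)"
      using S(3) unfolding on_time_jobs_def by (intro sum_mono2) auto
    moreover have "opt_tardy n p w d \<le> tardy_weight p w d \<sigma>"
      unfolding opt_tardy_def using S(2) by (intro Min_le[OF \<open>finite ?TW\<close>]) blast
    ultimately show "y \<le> int (sum w {..<n}) - int (opt_tardy n p w d)"
      using tardy_weight_add_on_time_jobs[OF S(2), of p w d] S(1) by linarith
  next
    have "int (sum w (on_time_jobs p d \<sigma>\<^sub>0)) = int (sum w {..<n}) - int (opt_tardy n p w d)"
      using tardy_weight_add_on_time_jobs[OF \<sigma>\<^sub>0(1), of p w d] \<sigma>\<^sub>0(2) by linarith
    then show "int (sum w {..<n}) - int (opt_tardy n p w d)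
        \<in> {int (sum w S) | S. early_set p d {..<n} S}"
      using early_set_on_time_jobs[OF \<sigma>\<^sub>0(1), of p d]
      by (intro CollectI exI[of _ "on_time_jobs p d \<sigma>\<^sub>0"]) simp
  qed
qed

theorem lemma11:
  fixes n :: nat and p w d :: "nat \<Rightarrow> nat"
  assumes "n > 0"
  shows "algorithm n p w d = int (opt_tardy n p w d)"
proof -
  let ?D = "d ` {..<n}"
  obtain dd0 ds where ds: "distinct_due_dates n d = dd0 # ds"
    using assms by (cases "distinct_due_dates n d") (auto simp: distinct_due_dates_def)
  have sorted: "sorted_wrt (<) (dd0 # ds)" and set: "set (dd0 # ds) = ?D"
    using ds[symmetric] unfolding distinct_due_dates_def by simp_all
  have all_jobs: "{j. j < n \<and> d j \<in> ?D} = {..<n}"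
    by auto
  have "algorithm n p w d = int (sum w {..<n}) - max_early_weight p w d {..<n} (Max ?D)"
    using foldl_maxplus_conv_sol_vec[OF sorted, unfolded set, OF order_refl, of p w]
    unfolding algorithm_def ds all_jobs by (simp del: upt_Suc)
  also have "\<dots> = int (sum w {..<n}) - Max {int (sum w S) | S. early_set p d {..<n} S}"
    by (simp add: max_early_weight_eq_Max_early_set)
  also have "\<dots> = int (opt_tardy n p w d)"
    unfolding Max_early_weight_eq_opt_tardy by simp
  finally show ?thesis .
qed

end
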